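(* For every $2n_1\in\{18,20\}$, $2n_2\in\{22,24,26\}$, $2n_3\in\{28,30\}$ and every integer $s\ge1$, there exist ternary Euclidean formally self-dual LCD codes with parameters $[4sn_1,2sn_1,6]_3$, $[4sn_2,2sn_2,7]_3$ and $[4sn_3,2sn_3,8]_3$. In addition, a ternary Euclidean formally self-dual LCD $[32s,16s,5]_3$ code exists for every integer $s\ge1$.
   Context: A linear code $\mathcal{C}$ over $\mathbb{F}_3$ is Euclidean LCD if $\mathcal{C}\cap\mathcal{C}^{\perp_E}=\{0\}$, where $\perp_E$ is the dual with respect to $\sum_ix_iy_i$; it is Euclidean formally self-dual if it has the same weight distribution as $\mathcal{C}^{\perp_E}$. $[n,k,d]_3$ denotes length $n$, dimension $k$, minimum distance $d$. *)

theory Defs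
  imports Complex_Main "HOL-Library.Function_Algebras"
begin

text \<open>Vectors of length N over a field 'a are functions nat => 'a vanishing outside {0..<N}.\<close>

definition vecs :: "nat \<Rightarrow> (nat \<Rightarrow> 'a::field) set" where
  "vecs N = {v. \<forall>i\<ge>N. v i = 0}"

definition vscale :: "'a::field \<Rightarrow> (nat \<Rightarrow> 'a) \<Rightarrow> (nat \<Rightarrow> 'a)" where
  "vscale c v = (\<lambda>i. c * v i)"

definition hwt :: "nat \<Rightarrow> (nat \<Rightarrow> 'a::field) \<Rightarrow> nat" where
  "hwt N v = card {i. i < N \<and> v i \<noteq> 0}"

definition euc_ip :: "nat \<Rightarrow> (nat \<Rightarrow> 'a::field) \<Rightarrow> (nat \<Rightarrow> 'a) \<Rightarrow> 'a" where
  "euc_ip N x y = (\<Sum>i<N. x i * y i)"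

definition linear_code :: "nat \<Rightarrow> nat \<Rightarrow> (nat \<Rightarrow> 'a::field) set \<Rightarrow> bool" where
  "linear_code N k C \<longleftrightarrow> C \<subseteq> vecs N \<and> module.subspace vscale C
     \<and> vector_space.dim vscale C = k"

definition min_dist :: "nat \<Rightarrow> (nat \<Rightarrow> 'a::field) set \<Rightarrow> nat" where
  "min_dist N C = Min {hwt N v | v. v \<in> C \<and> v \<noteq> 0}"

definition euc_dual :: "nat \<Rightarrow> (nat \<Rightarrow> 'a::field) set \<Rightarrow> (nat \<Rightarrow> 'a) set" where
  "euc_dual N C = {y \<in> vecs N. \<forall>x\<in>C. euc_ip N x y = 0}"

definition euc_LCD :: "nat \<Rightarrow> (nat \<Rightarrow> 'a::field) set \<Rightarrow> bool" where
  "euc_LCD N C \<longleftrightarrow> C \<inter> euc_dual N C = {0}"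

definition euc_fsd :: "nat \<Rightarrow> (nat \<Rightarrow> 'a::field) set \<Rightarrow> bool" where
  "euc_fsd N C \<longleftrightarrow> (\<forall>w. card {v \<in> C. hwt N v = w} = card {v \<in> euc_dual N C. hwt N v = w})"

definition fsd_lcd_code :: "nat \<Rightarrow> nat \<Rightarrow> nat \<Rightarrow> (nat \<Rightarrow> 'a::field) set \<Rightarrow> bool" where
  "fsd_lcd_code N k d C \<longleftrightarrow> linear_code N k C \<and> min_dist N C = d \<and> euc_LCD N C \<and> euc_fsd N C"

end

theory Submission
  imports Defs
begin

text \<open>
  Every code is the row space of \<open>[I | A]\<close> over the field with three elements, where
  \<open>A = diag(A\<^sub>m, \<dots>, A\<^sub>m)\<close> consists of \<open>2s\<close> copies of a symmetric \<open>m \<times> m\<close> block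
  (\<open>m = n\<^sub>i\<close>, resp. \<open>m = 8\<close>). For symmetric \<open>A\<close> the dual code is \<open>{(-xA, x)}\<close>, whose
  weight distribution is visibly that of \<open>{(x, xA)}\<close>; the code is LCD as soon as \<open>I + A\<^sup>2\<close>
  is nonsingular; and its minimum distance is the least weight of \<open>(x, xA)\<close>, \<open>x \<noteq> 0\<close>,
  which for a block-diagonal \<open>A\<close> is attained inside a single block. For each of the eight
  blocks the required properties are certified by evaluation: an inverse \<open>B\<close> of \<open>A\<^sub>m\<close>, an
  inverse of \<open>I + A\<^sub>m\<^sup>2\<close>, and the bound \<open>d \<le> wt x + wt (xA\<^sub>m)\<close> for all \<open>x\<close> of weight
  at most \<open>t\<close>, together with the same bound for \<open>B\<close>; since \<open>d \<le> 2t + 2\<close>, this covers all \<open>x\<close>.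
\<close>

interpretation vs: vector_space "vscale :: 'a::field \<Rightarrow> (nat \<Rightarrow> 'a) \<Rightarrow> nat \<Rightarrow> 'a"
  by unfold_locales (auto simp: vscale_def fun_eq_iff algebra_simps)

lemma vecs_vanish: "v \<in> vecs N \<Longrightarrow> N \<le> i \<Longrightarrow> v i = 0"
  by (simp add: vecs_def)

lemma vecs_mono: "v \<in> vecs m \<Longrightarrow> m \<le> n \<Longrightarrow> v \<in> vecs n"
  unfolding vecs_def by force

lemma vecs_eqI: "v \<in> vecs N \<Longrightarrow> w \<in> vecs N \<Longrightarrow> (\<And>i. i < N \<Longrightarrow> v i = w i) \<Longrightarrow> v = w"
  by (metis ext leI vecs_vanish)

lemma vecs_closed [simp]:
  "0 \<in> vecs N" "x \<in> vecs N \<Longrightarrow> y \<in> vecs N \<Longrightarrow> x + y \<in> vecs N"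
  "x \<in> vecs N \<Longrightarrow> - x \<in> vecs N" "x \<in> vecs N \<Longrightarrow> vscale c x \<in> vecs N"
  by (simp_all add: vecs_def vscale_def)

lemma hwt_eq_sum: "hwt N v = (\<Sum>i<N. of_bool (v i \<noteq> 0))"
  by (simp add: hwt_def Int_def conj_commute)

lemma hwt_le: "hwt N v \<le> N"
proof -
  have "hwt N v \<le> card {..<N}"
    unfolding hwt_def by (rule card_mono) auto
  then show ?thesis by simp
qed

lemma hwt_eq_0_iff: "v \<in> vecs N \<Longrightarrow> hwt N v = 0 \<longleftrightarrow> v = 0"
  by (auto simp: hwt_def fun_eq_iff vecs_def) (meson leI)

lemma hwt_zero [simp]: "hwt N 0 = 0"
  by (simp add: hwt_def)

lemma hwt_uminus [simp]: "hwt N (- v) = hwt N v"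
  by (simp add: hwt_def)

definition unit_vec :: "nat \<Rightarrow> nat \<Rightarrow> 'a::field" where
  "unit_vec i = (\<lambda>k. of_bool (k = i))"

lemma unit_vec_in_vecs: "i < N \<Longrightarrow> unit_vec i \<in> vecs N"
  by (simp add: unit_vec_def vecs_def)

lemma hwt_unit_vec: "i < M \<Longrightarrow> hwt M (unit_vec i :: nat \<Rightarrow> 'a::field) = 1"
proof -
  assume "i < M"
  then have "{k. k < M \<and> (unit_vec i k :: 'a) \<noteq> 0} = {i}"
    by (auto simp: unit_vec_def)
  then show ?thesis
    by (simp add: hwt_def)
qed

lemma euc_ip_unit_vec: "i < N \<Longrightarrow> euc_ip N (unit_vec i) v = v i"
  by (simp add: euc_ip_def unit_vec_def of_bool_def if_distrib[of "\<lambda>t. t * _"] cong: if_cong)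

lemma fun_sum_apply: "(\<Sum>i\<in>I. f i) k = (\<Sum>i\<in>I. f i k :: 'a::comm_monoid_add)"
  by (induction I rule: infinite_finite_induct) auto

lemma vecs_unit_vec_expansion: "x \<in> vecs N \<Longrightarrow> x = (\<Sum>i<N. vscale (x i) (unit_vec i))"
proof
  fix k
  assume "x \<in> vecs N"
  then show "x k = (\<Sum>i<N. vscale (x i) (unit_vec i)) k"
    by (cases "k < N") (simp_all add: fun_sum_apply vscale_def unit_vec_def vecs_def Int_absorb1)
qed

definition vec_mat :: "nat \<Rightarrow> (nat \<Rightarrow> nat \<Rightarrow> 'a::field) \<Rightarrow> (nat \<Rightarrow> 'a) \<Rightarrow> nat \<Rightarrow> 'a" where
  "vec_mat M A x = (\<lambda>j. if j < M then (\<Sum>i<M. x i * A i j) else 0)"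

definition mat_mult :: "nat \<Rightarrow> (nat \<Rightarrow> nat \<Rightarrow> 'a::field) \<Rightarrow> (nat \<Rightarrow> nat \<Rightarrow> 'a) \<Rightarrow> nat \<Rightarrow> nat \<Rightarrow> 'a" where
  "mat_mult M A B = (\<lambda>i k. \<Sum>j<M. A i j * B j k)"

definition mat_right_inverse :: "nat \<Rightarrow> (nat \<Rightarrow> nat \<Rightarrow> 'a::field) \<Rightarrow> (nat \<Rightarrow> nat \<Rightarrow> 'a) \<Rightarrow> bool" where
  "mat_right_inverse M A B \<longleftrightarrow> (\<forall>i<M. \<forall>k<M. mat_mult M A B i k = of_bool (i = k))"

definition sym_mat :: "nat \<Rightarrow> (nat \<Rightarrow> nat \<Rightarrow> 'a) \<Rightarrow> bool" where
  "sym_mat M A \<longleftrightarrow> (\<forall>i<M. \<forall>j<M. A i j = A j i)"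

lemma vec_mat_in_vecs [simp]: "vec_mat M A x \<in> vecs M"
  by (simp add: vec_mat_def vecs_def)

lemma vec_mat_zero [simp]: "vec_mat M A 0 = 0"
  by (simp add: vec_mat_def fun_eq_iff)

lemma vec_mat_add: "vec_mat M A (x + y) = vec_mat M A x + vec_mat M A y"
  by (simp add: vec_mat_def fun_eq_iff algebra_simps sum.distrib)

lemma vec_mat_vscale: "vec_mat M A (vscale c x) = vscale c (vec_mat M A x)"
  by (simp add: vec_mat_def vscale_def fun_eq_iff sum_distrib_left mult.assoc)

lemma vec_mat_cong:
  "(\<And>i j. i < M \<Longrightarrow> j < M \<Longrightarrow> A i j = B i j) \<Longrightarrow> vec_mat M A = vec_mat M B"
  by (auto simp: vec_mat_def fun_eq_iff intro!: sum.cong)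

lemma vec_mat_unit_vec: "i < M \<Longrightarrow> vec_mat M A (unit_vec i) = (\<lambda>j. if j < M then A i j else 0)"
  by (simp add: vec_mat_def unit_vec_def of_bool_def if_distrib[of "\<lambda>t. t * _"] cong: if_cong)

lemma vec_mat_mat_mult: "vec_mat M B (vec_mat M A x) = vec_mat M (mat_mult M A B) x"
proof -
  have "(\<Sum>j<M. (\<Sum>i<M. x i * A i j) * B j k) = (\<Sum>j<M. \<Sum>i<M. x i * (A i j * B j k))" for k
    by (simp add: sum_distrib_right mult.assoc)
  also have "\<dots> k = (\<Sum>i<M. x i * (\<Sum>j<M. A i j * B j k))" for k
    by (subst sum.swap) (simp add: sum_distrib_left)
  finally show ?thesis
    by (simp add: vec_mat_def mat_mult_def fun_eq_iff)
qed

lemma vec_mat_identity: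
  assumes "\<And>i j. i < M \<Longrightarrow> j < M \<Longrightarrow> A i j = of_bool (i = j)" and "x \<in> vecs M"
  shows "vec_mat M A x = x"
proof (rule vecs_eqI[OF vec_mat_in_vecs assms(2)])
  fix j
  assume "j < M"
  with assms(1) have "(\<Sum>i<M. x i * A i j) = (\<Sum>i<M. x i * of_bool (i = j))"
    by (intro sum.cong) auto
  with \<open>j < M\<close> show "vec_mat M A x j = x j"
    by (simp add: vec_mat_def)
qed

lemma vec_mat_right_inverse:
  "mat_right_inverse M A B \<Longrightarrow> x \<in> vecs M \<Longrightarrow> vec_mat M B (vec_mat M A x) = x"
  by (simp add: vec_mat_mat_mult vec_mat_identity mat_right_inverse_def)

lemma euc_ip_vec_mat_sym:
  assumes "sym_mat M A"
  shows "euc_ip M (vec_mat M A y) z = euc_ip M y (vec_mat M A z)"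
proof -
  have "euc_ip M (vec_mat M A y) z = (\<Sum>j<M. \<Sum>i<M. y i * A i j * z j)"
    by (simp add: euc_ip_def vec_mat_def sum_distrib_right)
  also have "\<dots> = (\<Sum>i<M. \<Sum>j<M. y i * (z j * A j i))"
    using assms by (subst sum.swap) (auto simp: sym_mat_def intro!: sum.cong)
  also have "\<dots> = euc_ip M y (vec_mat M A z)"
    by (simp add: euc_ip_def vec_mat_def sum_distrib_left)
  finally show ?thesis .
qed

definition vec_block :: "nat \<Rightarrow> (nat \<Rightarrow> 'a::zero) \<Rightarrow> nat \<Rightarrow> nat \<Rightarrow> 'a" where
  "vec_block m x b = (\<lambda>k. if k < m then x (b * m + k) else 0)"

lemma vec_block_zero [simp]: "vec_block m 0 b = (0 :: nat \<Rightarrow> 'a::zero)"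
  by (rule ext) (simp add: vec_block_def)

lemma vec_block_in_vecs [simp]: "vec_block m x b \<in> vecs m"
  by (simp add: vec_block_def vecs_def)

lemma vec_block_add: "vec_block m (x + y) b = vec_block m x b + vec_block m (y :: nat \<Rightarrow> 'a::monoid_add) b"
  by (rule ext) (simp add: vec_block_def)

lemma vec_block_of_vecs:
  assumes "x \<in> vecs m"
  shows "vec_block m x c = (if c = 0 then x else 0)"
proof (cases "c = 0")
  case False
  then have "m \<le> c * m + k" for k
    by (cases c) auto
  with assms False show ?thesis
    by (auto simp: vec_block_def vecs_def)
qed (use assms in \<open>auto simp: vec_block_def vecs_def\<close>)

lemma sum_blocks: "(\<Sum>i<r * m. f i) = (\<Sum>b<r. \<Sum>k<m. f (b * m + k :: nat))"
proof -
  have "(\<Sum>i<r * m. f i) = (\<Sum>b<r. sum f {b * m..<b * m + m})"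
    by (rule sum.nat_group[symmetric])
  also have "\<dots> = (\<Sum>b<r. \<Sum>k<m. f (b * m + k))"
    by (simp add: sum.atLeastLessThan_shift_0 atLeast0LessThan add.commute)
  finally show ?thesis .
qed

lemma hwt_blocks: "hwt (r * m) v = (\<Sum>b<r. hwt m (vec_block m v b))"
  by (simp add: hwt_eq_sum sum_blocks vec_block_def)

lemma euc_ip_blocks: "euc_ip (r * m) u v = (\<Sum>b<r. euc_ip m (vec_block m u b) (vec_block m v b))"
  by (simp add: euc_ip_def sum_blocks vec_block_def)

lemma vec_block_nonzero:
  assumes "x \<in> vecs (r * m)" and "x \<noteq> 0"
  obtains b where "b < r" and "vec_block m x b \<noteq> 0"
proof -
  obtain i where i: "x i \<noteq> 0"
    using assms(2) by (auto simp: fun_eq_iff)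
  then have "i < r * m"
    using assms(1) vecs_vanish leI by blast
  then have "0 < m"
    by (cases m) auto
  with \<open>i < r * m\<close> have "i div m < r" and "vec_block m x (i div m) (i mod m) = x i"
    by (simp_all add: vec_block_def less_mult_imp_div_less mult.commute[of _ m])
  with i that show ?thesis by fastforce
qed

definition vec_join :: "nat \<Rightarrow> (nat \<Rightarrow> 'a::zero) \<Rightarrow> (nat \<Rightarrow> 'a) \<Rightarrow> nat \<Rightarrow> 'a" where
  "vec_join M x y = (\<lambda>i. if i < M then x i else if i < 2 * M then y (i - M) else 0)"

lemma vec_join_in_vecs [simp]: "vec_join M x y \<in> vecs (2 * M)"
  by (simp add: vec_join_def vecs_def)

lemma vec_block_join_0 [simp]: "x \<in> vecs M \<Longrightarrow> vec_block M (vec_join M x y) 0 = x"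
  by (auto simp: vec_block_def vec_join_def vecs_def fun_eq_iff)

lemma vec_block_join_1 [simp]: "y \<in> vecs M \<Longrightarrow> vec_block M (vec_join M x y) (Suc 0) = y"
  by (auto simp: vec_block_def vec_join_def vecs_def fun_eq_iff)

lemma vec_join_blocks: "v \<in> vecs (2 * M) \<Longrightarrow> vec_join M (vec_block M v 0) (vec_block M v (Suc 0)) = v"
  by (auto simp: vec_block_def vec_join_def vecs_def fun_eq_iff)

lemma sum_lessThan_2: "(\<Sum>b<2. f b) = f (0::nat) + f (Suc 0)"
  by (simp add: numeral_2_eq_2)

lemma hwt_join:
  "x \<in> vecs M \<Longrightarrow> y \<in> vecs M \<Longrightarrow> hwt (2 * M) (vec_join M x y) = hwt M x + hwt M y"
  by (simp only: hwt_blocks sum_lessThan_2) simp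

lemma euc_ip_join:
  assumes "x \<in> vecs M" "y \<in> vecs M" "u \<in> vecs M" "w \<in> vecs M"
  shows "euc_ip (2 * M) (vec_join M x y) (vec_join M u w) = euc_ip M x u + euc_ip M y w"
  using assms by (simp only: euc_ip_blocks sum_lessThan_2) simp

lemma vec_join_zero [simp]: "vec_join M 0 0 = 0"
  by (rule ext) (simp add: vec_join_def)

lemma vec_join_eq_0_iff:
  assumes "x \<in> vecs M" "y \<in> vecs M"
  shows "vec_join M x y = 0 \<longleftrightarrow> x = 0 \<and> y = 0"
proof
  assume "vec_join M x y = 0"
  then have "vec_block M (vec_join M x y) 0 = 0" "vec_block M (vec_join M x y) (Suc 0) = 0"
    by simp_all
  with assms show "x = 0 \<and> y = 0"
    by simp
qed simp

lemma vec_join_add: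
  "vec_join M x y + vec_join M u w = vec_join M (x + u) (y + w :: nat \<Rightarrow> 'a::monoid_add)"
  by (rule ext) (simp add: vec_join_def)

lemma vec_join_vscale: "vscale c (vec_join M x y) = vec_join M (vscale c x) (vscale c y)"
  by (simp add: vec_join_def vscale_def fun_eq_iff)

section \<open>Codes with generator matrix [I | A]\<close>

definition sys_enc :: "nat \<Rightarrow> (nat \<Rightarrow> nat \<Rightarrow> 'a::field) \<Rightarrow> (nat \<Rightarrow> 'a) \<Rightarrow> nat \<Rightarrow> 'a" where
  "sys_enc M A x = vec_join M x (vec_mat M A x)"

definition sys_code :: "nat \<Rightarrow> (nat \<Rightarrow> nat \<Rightarrow> 'a::field) \<Rightarrow> (nat \<Rightarrow> 'a) set" where
  "sys_code M A = sys_enc M A ` vecs M"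

definition sys_weight :: "nat \<Rightarrow> (nat \<Rightarrow> nat \<Rightarrow> 'a::field) \<Rightarrow> (nat \<Rightarrow> 'a) \<Rightarrow> nat" where
  "sys_weight M A x = hwt M x + hwt M (vec_mat M A x)"

lemma sys_weight_zero [simp]: "sys_weight M A 0 = 0"
  by (simp add: sys_weight_def)

lemma sys_enc_add: "sys_enc M A (x + y) = sys_enc M A x + sys_enc M A y"
  by (simp add: sys_enc_def vec_join_add vec_mat_add)

lemma sys_enc_vscale: "sys_enc M A (vscale c x) = vscale c (sys_enc M A x)"
  by (simp add: sys_enc_def vec_join_vscale vec_mat_vscale)

lemma sys_enc_zero [simp]: "sys_enc M A 0 = 0"
  by (simp add: sys_enc_def)

lemma sys_enc_sum: "sys_enc M A (\<Sum>i\<in>I. f i) = (\<Sum>i\<in>I. sys_enc M A (f i))"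
proof (induction I rule: infinite_finite_induct)
  case (insert i I)
  then show ?case
    by (simp only: sum.insert[OF insert(1,2)] sys_enc_add insert(3))
qed (simp_all add: sys_enc_def vec_join_def vec_mat_def fun_eq_iff)

lemma inj_on_sys_enc: "inj_on (sys_enc M A) (vecs M)"
  by (rule inj_onI) (metis sys_enc_def vec_block_join_0)

lemma hwt_sys_enc: "x \<in> vecs M \<Longrightarrow> hwt (2 * M) (sys_enc M A x) = sys_weight M A x"
  by (simp add: sys_enc_def sys_weight_def hwt_join)

lemma sys_enc_eq_0_iff: "x \<in> vecs M \<Longrightarrow> sys_enc M A x = 0 \<longleftrightarrow> x = 0"
  by (auto simp: sys_enc_def vec_join_eq_0_iff)

lemma sys_code_subspace: "vs.subspace (sys_code M A)"
  unfolding vs.subspace_def sys_code_def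
proof (intro conjI ballI allI)
  show "0 \<in> sys_enc M A ` vecs M"
    using sys_enc_zero vecs_closed(1) by (rule image_eqI[OF sym])
next
  fix u v
  assume "u \<in> sys_enc M A ` vecs M" "v \<in> sys_enc M A ` vecs M"
  then obtain x y where "x \<in> vecs M" "y \<in> vecs M" "u = sys_enc M A x" "v = sys_enc M A y"
    by blast
  then show "u + v \<in> sys_enc M A ` vecs M"
    by (intro image_eqI[of _ _ "x + y"]) (simp_all add: sys_enc_add)
next
  fix c u
  assume "u \<in> sys_enc M A ` vecs M"
  then obtain x where "x \<in> vecs M" "u = sys_enc M A x"
    by blast
  then show "vscale c u \<in> sys_enc M A ` vecs M"
    by (intro image_eqI[of _ _ "vscale c x"]) (simp only: sys_enc_vscale, simp)
qed

lemma inj_on_sys_enc_unit_vec: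
  fixes A :: "nat \<Rightarrow> nat \<Rightarrow> 'a::field"
  shows "inj_on (\<lambda>i. sys_enc M A (unit_vec i)) {..<M}"
proof (rule inj_onI)
  fix i j
  assume "i \<in> {..<M}" "j \<in> {..<M}" "sys_enc M A (unit_vec i) = sys_enc M A (unit_vec j)"
  then have "unit_vec i = (unit_vec j :: nat \<Rightarrow> 'a)"
    by (auto intro: inj_onD[OF inj_on_sys_enc] unit_vec_in_vecs)
  from fun_cong[OF this, of i] show "i = j"
    by (simp add: unit_vec_def)
qed

lemma sys_code_subset_span: "sys_code M A \<subseteq> vs.span ((\<lambda>i. sys_enc M A (unit_vec i)) ` {..<M})"
proof
  fix v
  assume "v \<in> sys_code M A"
  then obtain x where x: "x \<in> vecs M" and v: "v = sys_enc M A x"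
    by (auto simp: sys_code_def)
  have "v = (\<Sum>i<M. vscale (x i) (sys_enc M A (unit_vec i)))"
    unfolding v by (subst vecs_unit_vec_expansion[OF x]) (simp add: sys_enc_sum sys_enc_vscale)
  also have "\<dots> \<in> vs.span ((\<lambda>i. sys_enc M A (unit_vec i)) ` {..<M})"
    by (intro vs.span_sum vs.span_scale vs.span_base) auto
  finally show "v \<in> vs.span ((\<lambda>i. sys_enc M A (unit_vec i)) ` {..<M})" .
qed

lemma independent_sys_enc_unit_vec: "vs.independent ((\<lambda>i. sys_enc M A (unit_vec i)) ` {..<M})"
proof
  let ?e = "\<lambda>i. sys_enc M A (unit_vec i)"
  assume "vs.dependent (?e ` {..<M})"
  then obtain c i where i: "i < M" and c: "c (?e i) \<noteq> 0"
    and comb: "(\<Sum>v\<in>?e ` {..<M}. vscale (c v) v) = 0"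
    using vs.dependent_finite[of "?e ` {..<M}"] by auto
  have "(\<Sum>v\<in>?e ` {..<M}. vscale (c v) v) i = (\<Sum>j<M. c (?e j) * ?e j i)"
    by (simp add: sum.reindex[OF inj_on_sys_enc_unit_vec] fun_sum_apply vscale_def)
  also have "\<dots> = (\<Sum>j<M. c (?e j) * of_bool (i = j))"
    using i by (intro sum.cong) (simp_all add: sys_enc_def vec_join_def unit_vec_def)
  also have "\<dots> = c (?e i)"
    using i by simp
  finally show False
    using comb c by simp
qed

lemma dim_sys_code: "vs.dim (sys_code M A) = M"
proof -
  have "(\<lambda>i. sys_enc M A (unit_vec i)) ` {..<M} \<subseteq> sys_code M A"
    by (auto simp: sys_code_def intro!: imageI unit_vec_in_vecs)
  then have "card ((\<lambda>i. sys_enc M A (unit_vec i)) ` {..<M}) = vs.dim (sys_code M A)"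
    using sys_code_subset_span independent_sys_enc_unit_vec by (rule vs.basis_card_eq_dim)
  then show ?thesis
    by (simp add: card_image[OF inj_on_sys_enc_unit_vec])
qed

lemma linear_code_sys_code: "linear_code (2 * M) M (sys_code M A)"
  using sys_code_subspace dim_sys_code by (auto simp: linear_code_def sys_code_def sys_enc_def)

lemma euc_ip_uminus_right: "euc_ip M y (- z) = - euc_ip M y z"
  by (simp add: euc_ip_def sum_negf)

definition sys_dual_enc :: "nat \<Rightarrow> (nat \<Rightarrow> nat \<Rightarrow> 'a::field) \<Rightarrow> (nat \<Rightarrow> 'a) \<Rightarrow> nat \<Rightarrow> 'a" where
  "sys_dual_enc M A x = vec_join M (- vec_mat M A x) x"

lemma sys_dual_enc_in_vecs [simp]: "sys_dual_enc M A x \<in> vecs (2 * M)"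
  by (simp add: sys_dual_enc_def)

lemma inj_on_sys_dual_enc: "inj_on (sys_dual_enc M A) (vecs M)"
  by (rule inj_onI) (metis sys_dual_enc_def vec_block_join_1)

lemma hwt_sys_dual_enc: "x \<in> vecs M \<Longrightarrow> hwt (2 * M) (sys_dual_enc M A x) = sys_weight M A x"
  by (simp add: sys_dual_enc_def sys_weight_def hwt_join)

lemma euc_ip_sys_enc_sys_dual_enc:
  assumes "sym_mat M A" and "x \<in> vecs M" and "y \<in> vecs M"
  shows "euc_ip (2 * M) (sys_enc M A y) (sys_dual_enc M A x) = 0"
proof -
  have "euc_ip (2 * M) (sys_enc M A y) (sys_dual_enc M A x)
      = euc_ip M y (- vec_mat M A x) + euc_ip M (vec_mat M A y) x"
    using assms(2,3) by (simp add: sys_enc_def sys_dual_enc_def euc_ip_join)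
  also have "\<dots> = 0"
    by (simp add: euc_ip_uminus_right euc_ip_vec_mat_sym[OF assms(1)])
  finally show ?thesis .
qed

lemma euc_dual_sys_code:
  fixes A :: "nat \<Rightarrow> nat \<Rightarrow> 'a::field"
  assumes "sym_mat M A"
  shows "euc_dual (2 * M) (sys_code M A) = sys_dual_enc M A ` vecs M"
proof (intro equalityI subsetI)
  fix w
  assume w: "w \<in> euc_dual (2 * M) (sys_code M A)"
  define x where "x = vec_block M w (Suc 0)"
  have "w \<in> vecs (2 * M)"
    using w by (simp add: euc_dual_def)
  then have w_join: "w = vec_join M (vec_block M w 0) x"
    unfolding x_def by (rule vec_join_blocks[symmetric])
  have "vec_block M w 0 = - vec_mat M A x"
  proof (rule vecs_eqI)
    fix i
    assume "i < M"
    then have "0 = euc_ip (2 * M) (sys_enc M A (unit_vec i)) w"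
      using w unit_vec_in_vecs by (auto simp: euc_dual_def sys_code_def)
    also have "\<dots> = euc_ip M (unit_vec i) (vec_block M w 0) + euc_ip M (unit_vec i) (vec_mat M A x)"
      using unit_vec_in_vecs[OF \<open>i < M\<close>, where 'a='a]
      by (subst w_join) (simp add: sys_enc_def euc_ip_join x_def euc_ip_vec_mat_sym[OF assms])
    also have "\<dots> = vec_block M w 0 i + vec_mat M A x i"
      using \<open>i < M\<close> by (simp add: euc_ip_unit_vec)
    finally show "vec_block M w 0 i = (- vec_mat M A x) i"
      by (simp add: eq_neg_iff_add_eq_0)
  qed simp_all
  then show "w \<in> sys_dual_enc M A ` vecs M"
    using w_join by (auto simp: x_def sys_dual_enc_def)
next
  fix w
  assume "w \<in> sys_dual_enc M A ` vecs M"
  then show "w \<in> euc_dual (2 * M) (sys_code M A)"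
    using euc_ip_sys_enc_sys_dual_enc[OF assms] by (auto simp: euc_dual_def sys_code_def)
qed

lemma card_image_filter:
  assumes "inj_on f S" and "\<And>x. x \<in> S \<Longrightarrow> h (f x) = g x"
  shows "card {v \<in> f ` S. h v = k} = card {x \<in> S. g x = k}"
proof -
  have "{v \<in> f ` S. h v = k} = f ` {x \<in> S. g x = k}"
    using assms(2) by auto
  then show ?thesis
    using inj_on_subset[OF assms(1)] by (simp add: card_image)
qed

lemma euc_fsd_sys_code:
  assumes "sym_mat M A"
  shows "euc_fsd (2 * M) (sys_code M A)"
proof -
  have "card {v \<in> sys_code M A. hwt (2 * M) v = k} = card {x \<in> vecs M. sys_weight M A x = k}" for k
    unfolding sys_code_def by (rule card_image_filter) (simp_all add: inj_on_sys_enc hwt_sys_enc)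
  moreover have "card {v \<in> euc_dual (2 * M) (sys_code M A). hwt (2 * M) v = k}
      = card {x \<in> vecs M. sys_weight M A x = k}" for k
    unfolding euc_dual_sys_code[OF assms]
    by (rule card_image_filter) (simp_all add: inj_on_sys_dual_enc hwt_sys_dual_enc)
  ultimately show ?thesis
    by (simp add: euc_fsd_def)
qed

definition nonsingular_one_plus_sq :: "nat \<Rightarrow> (nat \<Rightarrow> nat \<Rightarrow> 'a::field) \<Rightarrow> bool" where
  "nonsingular_one_plus_sq M A \<longleftrightarrow> (\<forall>x\<in>vecs M. x + vec_mat M A (vec_mat M A x) = 0 \<longrightarrow> x = 0)"

lemma nonsingular_one_plus_sq_if_inverse:
  assumes "mat_right_inverse M Q K"
    and "\<And>i j. i < M \<Longrightarrow> j < M \<Longrightarrow> Q i j = of_bool (i = j) + mat_mult M A A i j"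
  shows "nonsingular_one_plus_sq M A"
  unfolding nonsingular_one_plus_sq_def
proof (intro ballI impI)
  fix x
  assume x: "x \<in> vecs M" and "x + vec_mat M A (vec_mat M A x) = 0"
  have "vec_mat M Q x = vec_mat M (\<lambda>i j. of_bool (i = j)) x + vec_mat M (mat_mult M A A) x"
    using assms(2) by (simp add: vec_mat_cong[of M Q] vec_mat_def fun_eq_iff distrib_left sum.distrib)
  also have "\<dots> = x + vec_mat M A (vec_mat M A x)"
    using x by (simp add: vec_mat_identity vec_mat_mat_mult)
  finally have "vec_mat M Q x = 0"
    using \<open>x + vec_mat M A (vec_mat M A x) = 0\<close> by simp
  then show "x = 0"
    using vec_mat_right_inverse[OF assms(1) x] by simp
qed

lemma euc_LCD_sys_code:
  assumes "sym_mat M A" and "nonsingular_one_plus_sq M A"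
  shows "euc_LCD (2 * M) (sys_code M A)"
proof -
  have "v = 0" if "v \<in> sys_code M A" and "v \<in> euc_dual (2 * M) (sys_code M A)" for v
  proof -
    from that(1) obtain x where x: "x \<in> vecs M" "v = sys_enc M A x"
      by (auto simp: sys_code_def)
    from that(2) obtain y where y: "y \<in> vecs M" "v = vec_join M (- vec_mat M A y) y"
      by (auto simp: euc_dual_sys_code[OF assms(1)] sys_dual_enc_def)
    have "x = vec_block M v 0"
      using x by (simp add: sys_enc_def)
    also have "\<dots> = - vec_mat M A y"
      using y by simp
    finally have x_eq: "x = - vec_mat M A y" .
    have "vec_mat M A x = vec_block M v (Suc 0)"
      using x by (simp add: sys_enc_def)
    also have "\<dots> = y"
      using y by simp
    finally have "x + vec_mat M A (vec_mat M A x) = x + vec_mat M A y"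
      by (simp only:)
    also have "\<dots> = 0"
      using x_eq by simp
    finally have "x + vec_mat M A (vec_mat M A x) = 0" .
    with assms(2) x(1) have "x = 0"
      unfolding nonsingular_one_plus_sq_def by blast
    with x show "v = 0"
      by simp
  qed
  moreover have "0 \<in> sys_code M A"
    unfolding sys_code_def by (rule image_eqI[of _ _ 0]) simp_all
  moreover have "0 \<in> euc_dual (2 * M) (sys_code M A)"
    by (simp add: euc_dual_def euc_ip_def)
  ultimately show ?thesis
    unfolding euc_LCD_def by blast
qed

definition sys_min_weight :: "nat \<Rightarrow> (nat \<Rightarrow> nat \<Rightarrow> 'a::field) \<Rightarrow> nat \<Rightarrow> bool" where
  "sys_min_weight M A d \<longleftrightarrow> (\<forall>x\<in>vecs M. x \<noteq> 0 \<longrightarrow> d \<le> sys_weight M A x)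
     \<and> (\<exists>x\<in>vecs M. x \<noteq> 0 \<and> sys_weight M A x = d)"

(* The codeword (x, xA) equals (yB, y) for y = xA: unless one half has weight at most t,
   its weight is at least 2t + 2. *)
lemma sys_weight_bound_from_low_weights:
  assumes "mat_right_inverse M A B" and "d \<le> 2 * t + 2"
    and low_A: "\<And>x. x \<in> vecs M \<Longrightarrow> x \<noteq> 0 \<Longrightarrow> hwt M x \<le> t \<Longrightarrow> d \<le> sys_weight M A x"
    and low_B: "\<And>y. y \<in> vecs M \<Longrightarrow> y \<noteq> 0 \<Longrightarrow> hwt M y \<le> t \<Longrightarrow> d \<le> sys_weight M B y"
    and x: "x \<in> vecs M" "x \<noteq> 0"
  shows "d \<le> sys_weight M A x"
proof -
  consider "hwt M x \<le> t" | "hwt M (vec_mat M A x) \<le> t" | "t < hwt M x" "t < hwt M (vec_mat M A x)"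
    by linarith
  then show ?thesis
  proof cases
    case 1
    with low_A x show ?thesis by blast
  next
    case 2
    have cancel: "vec_mat M B (vec_mat M A x) = x"
      using vec_mat_right_inverse[OF assms(1) x(1)] .
    then have "vec_mat M A x \<noteq> 0"
      using x(2) by auto
    with 2 have "d \<le> sys_weight M B (vec_mat M A x)"
      by (intro low_B) simp_all
    also have "\<dots> = sys_weight M A x"
      by (simp add: sys_weight_def cancel)
    finally show ?thesis .
  next
    case 3
    with assms(2) show ?thesis
      by (simp add: sys_weight_def)
  qed
qed

lemma min_dist_sys_code:
  assumes "sys_min_weight M A d"
  shows "min_dist (2 * M) (sys_code M A) = d"
proof -
  have "{hwt (2 * M) v | v. v \<in> sys_code M A \<and> v \<noteq> 0} = hwt (2 * M) ` (sys_code M A - {0})"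
    by blast
  also have "sys_code M A - {0} = sys_enc M A ` {x \<in> vecs M. x \<noteq> 0}"
    by (auto simp: sys_code_def sys_enc_eq_0_iff)
  also have "hwt (2 * M) ` \<dots> = sys_weight M A ` {x \<in> vecs M. x \<noteq> 0}"
    unfolding image_image by (rule image_cong) (simp_all add: hwt_sys_enc)
  finally have weights: "{hwt (2 * M) v | v. v \<in> sys_code M A \<and> v \<noteq> 0} = sys_weight M A ` {x \<in> vecs M. x \<noteq> 0}" .
  have "sys_weight M A ` {x \<in> vecs M. x \<noteq> 0} \<subseteq> {..2 * M}"
    using add_mono[OF hwt_le hwt_le] by (auto simp: sys_weight_def mult_2)
  then have "finite (sys_weight M A ` {x \<in> vecs M. x \<noteq> 0})"
    by (rule finite_subset) simp
  then show ?thesis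
    unfolding min_dist_def weights using assms
    by (intro Min_eqI) (auto simp: sys_min_weight_def)
qed

theorem fsd_lcd_code_sys_code:
  assumes "sym_mat M A" and "nonsingular_one_plus_sq M A" and "sys_min_weight M A d"
  shows "fsd_lcd_code (2 * M) M d (sys_code M A)"
  unfolding fsd_lcd_code_def
  using assms linear_code_sys_code min_dist_sys_code euc_LCD_sys_code euc_fsd_sys_code by blast

section \<open>Block-diagonal matrices\<close>

definition block_diag :: "nat \<Rightarrow> (nat \<Rightarrow> nat \<Rightarrow> 'a::zero) \<Rightarrow> nat \<Rightarrow> nat \<Rightarrow> 'a" where
  "block_diag m A = (\<lambda>i j. if i div m = j div m then A (i mod m) (j mod m) else 0)"

lemma block_index_less: "b < r \<Longrightarrow> k < m \<Longrightarrow> b * m + k < r * (m::nat)"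
  by (metis add_less_cancel_left less_le_trans mult_Suc mult_le_mono1 Suc_leI add.commute)

lemma vec_block_vec_mat_block_diag:
  assumes "b < r"
  shows "vec_block m (vec_mat (r * m) (block_diag m A) x) b = vec_mat m A (vec_block m x b)"
proof
  fix k
  show "vec_block m (vec_mat (r * m) (block_diag m A) x) b k = vec_mat m A (vec_block m x b) k"
  proof (cases "k < m")
    case True
    then have "vec_block m (vec_mat (r * m) (block_diag m A) x) b k
        = (\<Sum>c<r. \<Sum>l<m. x (c * m + l) * block_diag m A (c * m + l) (b * m + k))"
      using block_index_less[OF assms True] by (simp add: vec_block_def vec_mat_def sum_blocks)
    also have "\<dots> = (\<Sum>c<r. if c = b then \<Sum>l<m. x (b * m + l) * A l k else 0)"
      using True by (intro sum.cong refl) (auto simp: block_diag_def)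
    also have "\<dots> = vec_mat m A (vec_block m x b) k"
      using assms True by (simp add: vec_mat_def vec_block_def)
    finally show ?thesis .
  qed (simp add: vec_block_def vec_mat_def)
qed

lemma sys_weight_block_diag:
  "sys_weight (r * m) (block_diag m A) x = (\<Sum>b<r. sys_weight m A (vec_block m x b))"
  by (simp add: sys_weight_def hwt_blocks sum.distrib vec_block_vec_mat_block_diag)

lemma sym_mat_block_diag: "sym_mat m A \<Longrightarrow> sym_mat (r * m) (block_diag m A)"
  by (cases "m = 0") (auto simp: sym_mat_def block_diag_def)

lemma nonsingular_one_plus_sq_block_diag:
  assumes "nonsingular_one_plus_sq m A"
  shows "nonsingular_one_plus_sq (r * m) (block_diag m A)"
  unfolding nonsingular_one_plus_sq_def
proof (intro ballI impI)
  fix x :: "nat \<Rightarrow> 'a"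
  assume x: "x \<in> vecs (r * m)"
    and eq: "x + vec_mat (r * m) (block_diag m A) (vec_mat (r * m) (block_diag m A) x) = 0"
  have blocks: "vec_block m x b = 0" if "b < r" for b
  proof -
    have "vec_block m x b + vec_mat m A (vec_mat m A (vec_block m x b)) = 0"
      using arg_cong[OF eq, of "\<lambda>v. vec_block m v b"]
      by (simp add: vec_block_add vec_block_vec_mat_block_diag[OF that])
    with assms vec_block_in_vecs show ?thesis
      unfolding nonsingular_one_plus_sq_def by blast
  qed
  show "x = 0"
  proof (rule ccontr)
    assume "x \<noteq> 0"
    with x obtain b where "b < r" and "vec_block m x b \<noteq> 0"
      by (rule vec_block_nonzero)
    with blocks show False
      by blast
  qed
qed

lemma sys_min_weight_block_diag:
  fixes A :: "nat \<Rightarrow> nat \<Rightarrow> 'a::field"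
  assumes "sys_min_weight m A d" and "0 < r"
  shows "sys_min_weight (r * m) (block_diag m A) d"
  unfolding sys_min_weight_def
proof (intro conjI ballI impI)
  fix x :: "nat \<Rightarrow> 'a"
  assume "x \<in> vecs (r * m)" and "x \<noteq> 0"
  then obtain b where "b < r" and "vec_block m x b \<noteq> 0"
    by (rule vec_block_nonzero)
  with assms(1) have "d \<le> sys_weight m A (vec_block m x b)"
    by (simp add: sys_min_weight_def)
  also have "\<dots> \<le> sys_weight (r * m) (block_diag m A) x"
    unfolding sys_weight_block_diag using \<open>b < r\<close> by (intro member_le_sum) auto
  finally show "d \<le> sys_weight (r * m) (block_diag m A) x" .
next
  obtain x where x: "x \<in> vecs m" "x \<noteq> 0" "sys_weight m A x = d"
    using assms(1) by (auto simp: sys_min_weight_def)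
  have "m \<le> r * m"
    using assms(2) by (cases r) auto
  with x(1) have "x \<in> vecs (r * m)"
    by (rule vecs_mono)
  moreover have "sys_weight (r * m) (block_diag m A) x = (\<Sum>c<r. if c = 0 then d else 0)"
    unfolding sys_weight_block_diag using x by (intro sum.cong) (simp_all add: vec_block_of_vecs)
  ultimately show "\<exists>x\<in>vecs (r * m). x \<noteq> 0 \<and> sys_weight (r * m) (block_diag m A) x = d"
    using x(2) assms(2) by auto
qed

section \<open>Fields with three elements\<close>

lemma of_nat_card_UNIV_eq_0:
  assumes "finite (UNIV :: 'a::ring_1 set)"
  shows "of_nat (card (UNIV :: 'a set)) = (0 :: 'a)"
proof -
  have "(\<Sum>y\<in>UNIV. y) = (\<Sum>y\<in>UNIV. y + (1 :: 'a))"
    by (rule sum.reindex_bij_witness[of _ "\<lambda>y. y + 1" "\<lambda>y. y - 1"]) auto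
  with assms show ?thesis
    by (simp add: sum.distrib)
qed

lemma card_UNIV_3_field:
  assumes "card (UNIV :: 'a::field set) = 3"
  shows "(3 :: 'a) = 0" and "UNIV = {0, 1, - 1 :: 'a}"
proof -
  have fin: "finite (UNIV :: 'a set)"
    using assms card.infinite by fastforce
  show three: "(3 :: 'a) = 0"
    using of_nat_card_UNIV_eq_0[OF fin] assms by simp
  have two: "(2 :: 'a) \<noteq> 0"
  proof
    assume "(2 :: 'a) = 0"
    have "(3 :: 'a) = 2 + 1"
      by simp
    with \<open>(2 :: 'a) = 0\<close> three show False
      by simp
  qed
  have "(1 :: 'a) \<noteq> - 1"
    using two by (simp add: eq_neg_iff_add_eq_0)
  then have "card {0, 1, - 1 :: 'a} = 3"
    by simp
  with assms have "{0, 1, - 1 :: 'a} = UNIV"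
    by (intro card_subset_eq[OF fin subset_UNIV]) simp
  then show "UNIV = {0, 1, - 1 :: 'a}" ..
qed

(* Arithmetic of the prime field on a datatype, which code_simp evaluates by pattern matching;
   f3_val maps it homomorphically into every field of characteristic 3. *)
datatype f3 = Z | P | N

fun f3_add :: "f3 \<Rightarrow> f3 \<Rightarrow> f3" where
  "f3_add Z y = y"
| "f3_add x Z = x"
| "f3_add P P = N"
| "f3_add N N = P"
| "f3_add P N = Z"
| "f3_add N P = Z"

fun f3_mul :: "f3 \<Rightarrow> f3 \<Rightarrow> f3" where
  "f3_mul Z y = Z"
| "f3_mul x Z = Z"
| "f3_mul P y = y"
| "f3_mul N P = N"
| "f3_mul N N = P"

fun f3_val :: "f3 \<Rightarrow> 'a::ring_1" where
  "f3_val Z = 0"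
| "f3_val P = 1"
| "f3_val N = - 1"

definition f3_of :: "'a::ring_1 \<Rightarrow> f3" where
  "f3_of y = (if y = 0 then Z else if y = 1 then P else N)"

lemma f3_val_add:
  assumes "(3 :: 'a::ring_1) = 0"
  shows "f3_val (f3_add x y) = f3_val x + (f3_val y :: 'a)"
proof -
  have one: "(1 :: 'a) + 1 = - 1"
    using assms by (simp add: eq_neg_iff_add_eq_0)
  have "(- 1 :: 'a) + - 1 = - (1 + 1)"
    by (simp only: minus_add_distrib)
  also have "\<dots> = 1"
    by (simp only: one minus_minus)
  finally have minus_one: "(- 1 :: 'a) + - 1 = 1" .
  with one assms show ?thesis
    by (cases x; cases y) simp_all
qed

lemma f3_val_mul: "f3_val (f3_mul x y) = f3_val x * (f3_val y :: 'a::ring_1)"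
  by (cases x; cases y) simp_all

lemma f3_val_eq_0_iff [simp]: "f3_val x = (0 :: 'a::ring_1) \<longleftrightarrow> x = Z"
  by (cases x) simp_all

lemma f3_val_f3_of: "y \<in> {0, 1, - 1} \<Longrightarrow> f3_val (f3_of y) = (y :: 'a::ring_1)"
  by (auto simp: f3_of_def)

section \<open>Certificates computed over GF(3)\<close>

definition add_scaled :: "f3 \<Rightarrow> f3 list \<Rightarrow> f3 list \<Rightarrow> f3 list" where
  "add_scaled c r v = (if c = Z then v else map2 (\<lambda>a b. f3_add (f3_mul c a) b) r v)"

definition row_comb :: "f3 list \<Rightarrow> f3 list list \<Rightarrow> f3 list \<Rightarrow> f3 list" where
  "row_comb w X v = fold (\<lambda>(c, r). add_scaled c r) (zip w X) v"

definition f3_weight :: "f3 list \<Rightarrow> nat" where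
  "f3_weight v = length (filter (\<lambda>c. c \<noteq> Z) v)"

lemma row_comb_Cons [simp]: "row_comb (c # w) (r # X) v = row_comb w X (add_scaled c r v)"
  by (simp add: row_comb_def)

lemma row_comb_Nil [simp]: "row_comb [] X v = v"
  by (simp add: row_comb_def)

lemma row_comb_Nil2 [simp]: "row_comb w [] v = v"
  by (simp add: row_comb_def)

lemma row_comb_replicate_Z: "row_comb (replicate n Z) X v = v"
proof (induction n arbitrary: X)
  case (Suc n)
  then show ?case
    by (cases X) (simp_all add: add_scaled_def)
qed simp

lemma f3_weight_Nil [simp]: "f3_weight [] = 0"
  by (simp add: f3_weight_def)

lemma f3_weight_replicate_Z [simp]: "f3_weight (replicate n Z) = 0"
  by (simp add: f3_weight_def)

lemma f3_weight_Cons [simp]: "f3_weight (c # w) = (if c = Z then 0 else 1) + f3_weight w"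
  by (simp add: f3_weight_def)

lemma f3_weight_eq_0_iff: "f3_weight w = 0 \<longleftrightarrow> w = replicate (length w) Z"
  by (induction w) auto

lemma all_f3: "(\<forall>c. R c) \<longleftrightarrow> R Z \<and> R P \<and> R N"
  by (metis f3.exhaust)

(* Rows are added one at a time, so words with a common prefix share the partial sum. *)
fun forall_low_weight_combs :: "nat \<Rightarrow> f3 list list \<Rightarrow> (nat \<Rightarrow> f3 list \<Rightarrow> bool) \<Rightarrow> nat \<Rightarrow> f3 list \<Rightarrow> bool" where
  "forall_low_weight_combs 0 X Q k v = Q k v"
| "forall_low_weight_combs (Suc t) [] Q k v = Q k v"
| "forall_low_weight_combs (Suc t) (r # X) Q k v \<longleftrightarrow>
     forall_low_weight_combs (Suc t) X Q k v \<and>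
     forall_low_weight_combs t X Q (Suc k) (add_scaled P r v) \<and>
     forall_low_weight_combs t X Q (Suc k) (add_scaled N r v)"

lemma forall_low_weight_combs_iff:
  "forall_low_weight_combs t X Q k v \<longleftrightarrow>
     (\<forall>w. length w = length X \<longrightarrow> f3_weight w \<le> t \<longrightarrow> Q (k + f3_weight w) (row_comb w X v))"
proof (induction t X Q k v rule: forall_low_weight_combs.induct)
  case (1 X Q k v)
  show ?case
    by (auto simp: f3_weight_eq_0_iff row_comb_replicate_Z dest: spec[of _ "replicate (length X) Z"])
next
  case (3 t r X Q k v)
  have "(\<forall>w. length w = length (r # X) \<longrightarrow> f3_weight w \<le> Suc t \<longrightarrow>
        Q (k + f3_weight w) (row_comb w (r # X) v)) \<longleftrightarrow>
      (\<forall>c w. length w = length X \<longrightarrow> f3_weight (c # w) \<le> Suc t \<longrightarrow>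
        Q (k + f3_weight (c # w)) (row_comb (c # w) (r # X) v))"
    by (auto simp del: f3_weight_Cons row_comb_Cons simp add: length_Suc_conv)
  also have "\<dots> \<longleftrightarrow>
      (\<forall>w. length w = length X \<longrightarrow> f3_weight w \<le> Suc t \<longrightarrow> Q (k + f3_weight w) (row_comb w X v)) \<and>
      (\<forall>w. length w = length X \<longrightarrow> f3_weight w \<le> t \<longrightarrow>
        Q (Suc k + f3_weight w) (row_comb w X (add_scaled P r v))) \<and>
      (\<forall>w. length w = length X \<longrightarrow> f3_weight w \<le> t \<longrightarrow>
        Q (Suc k + f3_weight w) (row_comb w X (add_scaled N r v)))"
    by (subst all_f3) (simp add: add_scaled_def)
  finally show ?case
    using "3.IH" by simp
qed simp

definition vec_of_list :: "f3 list \<Rightarrow> nat \<Rightarrow> 'a::ring_1" where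
  "vec_of_list v = (\<lambda>i. if i < length v then f3_val (v ! i) else 0)"

definition mat_of_lists :: "f3 list list \<Rightarrow> nat \<Rightarrow> nat \<Rightarrow> 'a::ring_1" where
  "mat_of_lists X = (\<lambda>i j. f3_val (X ! i ! j))"

definition square_lists :: "nat \<Rightarrow> 'b list list \<Rightarrow> bool" where
  "square_lists m X \<longleftrightarrow> length X = m \<and> (\<forall>r\<in>set X. length r = m)"

lemma length_add_scaled: "length r = length v \<Longrightarrow> length (add_scaled c r v) = length v"
  by (simp add: add_scaled_def)

lemma length_row_comb: "\<forall>r\<in>set X. length r = length v \<Longrightarrow> length (row_comb w X v) = length v"
proof (induction w arbitrary: X v)
  case (Cons c w)
  then show ?case
    by (cases X) (simp_all add: length_add_scaled)
qed simp

lemma row_comb_nth: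
  assumes "(3 :: 'a::ring_1) = 0" and "length w = length X" and "\<forall>r\<in>set X. length r = length v"
    and "j < length v"
  shows "f3_val (row_comb w X v ! j) = f3_val (v ! j) + (\<Sum>i<length w. f3_val (w ! i) * (f3_val (X ! i ! j) :: 'a))"
  using assms(2-4)
proof (induction w X arbitrary: v rule: list_induct2)
  case (Cons c w r X)
  then have "f3_val (add_scaled c r v ! j) = f3_val c * f3_val (r ! j) + (f3_val (v ! j) :: 'a)"
    by (auto simp: add_scaled_def f3_val_add[OF assms(1)] f3_val_mul)
  with Cons show ?case
    by (simp add: length_add_scaled sum.lessThan_Suc_shift algebra_simps del: sum.lessThan_Suc)
qed simp

lemma vec_of_list_row_comb:
  assumes "(3 :: 'a::field) = 0" and "square_lists m X" and "length w = m"
  shows "vec_of_list (row_comb w X (replicate m Z)) = vec_mat m (mat_of_lists X) (vec_of_list w :: nat \<Rightarrow> 'a)"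
  using row_comb_nth[OF assms(1), of w X "replicate m Z"] length_row_comb[of X "replicate m Z" w] assms(2,3)
  by (auto simp: vec_of_list_def vec_mat_def mat_of_lists_def square_lists_def fun_eq_iff)

lemma hwt_vec_of_list:
  assumes "length v = m"
  shows "hwt m (vec_of_list v :: nat \<Rightarrow> 'a::field) = f3_weight v"
proof -
  have "{i. i < m \<and> (vec_of_list v i :: 'a) \<noteq> 0} = {i. i < length v \<and> v ! i \<noteq> Z}"
    using assms by (auto simp: vec_of_list_def)
  then show ?thesis
    by (simp add: hwt_def f3_weight_def length_filter_conv_card)
qed

lemma vec_of_list_f3_of:
  assumes "UNIV = {0, 1, - 1 :: 'a::field}" and "x \<in> vecs m"
  shows "vec_of_list (map (\<lambda>i. f3_of (x i)) [0..<m]) = (x :: nat \<Rightarrow> 'a)"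
  using assms by (auto simp: vec_of_list_def f3_val_f3_of vecs_def fun_eq_iff)

definition mat_mult_lists :: "nat \<Rightarrow> f3 list list \<Rightarrow> f3 list list \<Rightarrow> f3 list list" where
  "mat_mult_lists m X Y = map (\<lambda>w. row_comb w Y (replicate m Z)) X"

definition id_lists :: "nat \<Rightarrow> f3 list list" where
  "id_lists m = map (\<lambda>i. map (\<lambda>j. if i = j then P else Z) [0..<m]) [0..<m]"

definition one_plus_sq_lists :: "nat \<Rightarrow> f3 list list \<Rightarrow> f3 list list" where
  "one_plus_sq_lists m A = map2 (map2 f3_add) (id_lists m) (mat_mult_lists m A A)"

lemma mat_mult_lists_nth:
  assumes "(3 :: 'a::field) = 0" and "square_lists m X" and "square_lists m Y" and "i < m" and "k < m"
  shows "length (mat_mult_lists m X Y ! i) = m"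
    and "f3_val (mat_mult_lists m X Y ! i ! k) = (mat_mult m (mat_of_lists X) (mat_of_lists Y) i k :: 'a)"
  using row_comb_nth[OF assms(1), of "X ! i" Y "replicate m Z"] length_row_comb[of Y "replicate m Z" "X ! i"] assms(2-5)
  by (simp_all add: mat_mult_lists_def square_lists_def mat_mult_def mat_of_lists_def)

lemma mat_of_lists_id_lists: "i < m \<Longrightarrow> k < m \<Longrightarrow> mat_of_lists (id_lists m) i k = of_bool (i = k)"
  by (simp add: mat_of_lists_def id_lists_def)

lemma mat_right_inverse_of_lists:
  assumes "(3 :: 'a::field) = 0" and "square_lists m X" and "square_lists m Y"
    and "mat_mult_lists m X Y = id_lists m"
  shows "mat_right_inverse m (mat_of_lists X) (mat_of_lists Y :: nat \<Rightarrow> nat \<Rightarrow> 'a)"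
  unfolding mat_right_inverse_def
proof (intro allI impI)
  fix i k
  assume "i < m" "k < m"
  then have "mat_mult m (mat_of_lists X) (mat_of_lists Y) i k = (f3_val (mat_mult_lists m X Y ! i ! k) :: 'a)"
    by (simp add: mat_mult_lists_nth(2)[OF assms(1-3)])
  also have "\<dots> = mat_of_lists (id_lists m) i k"
    by (simp add: assms(4) mat_of_lists_def)
  also have "\<dots> = of_bool (i = k)"
    using \<open>i < m\<close> \<open>k < m\<close> by (rule mat_of_lists_id_lists)
  finally show "mat_mult m (mat_of_lists X) (mat_of_lists Y) i k = (of_bool (i = k) :: 'a)" .
qed

lemma mat_of_one_plus_sq_lists:
  assumes "(3 :: 'a::field) = 0" and "square_lists m A"
  shows "square_lists m (one_plus_sq_lists m A)"
    and "\<And>i k. i < m \<Longrightarrow> k < m \<Longrightarrow> mat_of_lists (one_plus_sq_lists m A) i k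
      = of_bool (i = k) + mat_mult m (mat_of_lists A) (mat_of_lists A :: nat \<Rightarrow> nat \<Rightarrow> 'a) i k"
  using mat_mult_lists_nth[OF assms(1,2,2)] assms(2)
  by (auto simp: one_plus_sq_lists_def square_lists_def id_lists_def mat_mult_lists_def
      mat_of_lists_def f3_val_add[OF assms(1)] in_set_conv_nth)

definition low_weight_check :: "nat \<Rightarrow> nat \<Rightarrow> nat \<Rightarrow> f3 list list \<Rightarrow> bool" where
  "low_weight_check m t d X \<longleftrightarrow>
     forall_low_weight_combs t X (\<lambda>k v. k = 0 \<or> d \<le> k + f3_weight v) 0 (replicate m Z)"

lemma low_weight_bound_of_check:
  fixes x :: "nat \<Rightarrow> 'a::field"
  assumes "card (UNIV :: 'a set) = 3" and "square_lists m X" and "low_weight_check m t d X"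
    and "x \<in> vecs m" and "x \<noteq> 0" and "hwt m x \<le> t"
  shows "d \<le> sys_weight m (mat_of_lists X) x"
proof -
  define w where "w = map (\<lambda>i. f3_of (x i)) [0..<m]"
  have len: "length w = m"
    by (simp add: w_def)
  have x_w: "vec_of_list w = x"
    unfolding w_def using card_UNIV_3_field(2)[OF assms(1)] assms(4) by (rule vec_of_list_f3_of)
  have weight: "f3_weight w = hwt m x"
    using hwt_vec_of_list[OF len, where 'a='a] x_w by simp
  have xA: "vec_of_list (row_comb w X (replicate m Z)) = vec_mat m (mat_of_lists X) x"
    using vec_of_list_row_comb[OF card_UNIV_3_field(1)[OF assms(1)] assms(2) len] x_w by simp
  have "length (row_comb w X (replicate m Z)) = m"
    using assms(2) by (simp add: length_row_comb square_lists_def)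
  then have weight_xA: "f3_weight (row_comb w X (replicate m Z)) = hwt m (vec_mat m (mat_of_lists X) x)"
    using hwt_vec_of_list[where 'a='a] xA by metis
  have "\<forall>w. length w = length X \<longrightarrow> f3_weight w \<le> t \<longrightarrow>
      f3_weight w = 0 \<or> d \<le> f3_weight w + f3_weight (row_comb w X (replicate m Z))"
    using assms(3) by (simp add: low_weight_check_def forall_low_weight_combs_iff)
  moreover have "length w = length X"
    using assms(2) len by (simp add: square_lists_def)
  moreover have "f3_weight w \<noteq> 0"
    using weight hwt_eq_0_iff[OF assms(4)] assms(5) by simp
  ultimately have "d \<le> f3_weight w + f3_weight (row_comb w X (replicate m Z))"
    using weight assms(6) by (auto dest: spec[of _ w])
  then show ?thesis
    using weight weight_xA by (simp add: sys_weight_def)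
qed

definition ternary_certificate ::
    "nat \<Rightarrow> nat \<Rightarrow> nat \<Rightarrow> f3 list list \<Rightarrow> f3 list list \<Rightarrow> f3 list list \<Rightarrow> bool" where
  "ternary_certificate m t d A B K \<longleftrightarrow>
     0 < m \<and> d \<le> 2 * t + 2 \<and> square_lists m A \<and> square_lists m B \<and> square_lists m K \<and>
     (\<forall>i<m. \<forall>j<m. A ! i ! j = A ! j ! i) \<and>
     mat_mult_lists m A B = id_lists m \<and>
     mat_mult_lists m (one_plus_sq_lists m A) K = id_lists m \<and>
     low_weight_check m t d A \<and> low_weight_check m t d B \<and>
     Suc (f3_weight (A ! 0)) = d"

lemma nonsingular_one_plus_sq_of_certificate:
  assumes "(3 :: 'a::field) = 0" and "ternary_certificate m t d A B K"
  shows "nonsingular_one_plus_sq m (mat_of_lists A :: nat \<Rightarrow> nat \<Rightarrow> 'a)"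
proof -
  note cert = assms(2)[unfolded ternary_certificate_def]
  have "mat_right_inverse m (mat_of_lists (one_plus_sq_lists m A)) (mat_of_lists K :: nat \<Rightarrow> nat \<Rightarrow> 'a)"
    using cert mat_of_one_plus_sq_lists(1)[OF assms(1)] by (intro mat_right_inverse_of_lists[OF assms(1)]) simp_all
  then show ?thesis
    by (rule nonsingular_one_plus_sq_if_inverse) (use cert mat_of_one_plus_sq_lists(2)[OF assms(1)] in simp)
qed

lemma sys_min_weight_of_certificate:
  assumes "card (UNIV :: 'a::field set) = 3" and "ternary_certificate m t d A B K"
  shows "sys_min_weight m (mat_of_lists A :: nat \<Rightarrow> nat \<Rightarrow> 'a) d"
proof -
  let ?A = "mat_of_lists A :: nat \<Rightarrow> nat \<Rightarrow> 'a"
  note cert = assms(2)[unfolded ternary_certificate_def]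
  have inv: "mat_right_inverse m ?A (mat_of_lists B)"
    using cert by (intro mat_right_inverse_of_lists[OF card_UNIV_3_field(1)[OF assms(1)]]) simp_all
  have "vec_mat m ?A (unit_vec 0) = vec_of_list (A ! 0)"
    using cert by (auto simp: vec_mat_unit_vec vec_of_list_def mat_of_lists_def square_lists_def)
  then have "sys_weight m ?A (unit_vec 0) = d"
    using cert by (simp add: sys_weight_def hwt_unit_vec hwt_vec_of_list square_lists_def)
  moreover have "d \<le> sys_weight m ?A x" if "x \<in> vecs m" "x \<noteq> 0" for x
  proof (rule sys_weight_bound_from_low_weights[OF inv _ _ _ that])
    show "d \<le> 2 * t + 2"
      using cert by simp
    show "d \<le> sys_weight m ?A y" if "y \<in> vecs m" "y \<noteq> 0" "hwt m y \<le> t" for y :: "nat \<Rightarrow> 'a"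
      using cert by (intro low_weight_bound_of_check[OF assms(1) _ _ that]) simp_all
    show "d \<le> sys_weight m (mat_of_lists B) y" if "y \<in> vecs m" "y \<noteq> 0" "hwt m y \<le> t" for y :: "nat \<Rightarrow> 'a"
      using cert by (intro low_weight_bound_of_check[OF assms(1) _ _ that]) simp_all
  qed
  moreover have "(unit_vec 0 :: nat \<Rightarrow> 'a) \<in> vecs m"
    using cert by (simp add: unit_vec_in_vecs)
  moreover have "unit_vec 0 \<noteq> (0 :: nat \<Rightarrow> 'a)"
    by (simp add: unit_vec_def fun_eq_iff)
  ultimately show ?thesis
    unfolding sys_min_weight_def by blast
qed

theorem fsd_lcd_code_of_certificate:
  assumes "card (UNIV :: 'a::field set) = 3" and "ternary_certificate m t d A B K" and "0 < r"
  shows "\<exists>C :: (nat \<Rightarrow> 'a) set. fsd_lcd_code (2 * (r * m)) (r * m) d C"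
proof -
  have "sym_mat m (mat_of_lists A :: nat \<Rightarrow> nat \<Rightarrow> 'a)"
    using assms(2) by (simp add: ternary_certificate_def sym_mat_def mat_of_lists_def)
  moreover have "nonsingular_one_plus_sq m (mat_of_lists A :: nat \<Rightarrow> nat \<Rightarrow> 'a)"
    using card_UNIV_3_field(1)[OF assms(1)] assms(2) by (rule nonsingular_one_plus_sq_of_certificate)
  moreover have "sys_min_weight m (mat_of_lists A :: nat \<Rightarrow> nat \<Rightarrow> 'a) d"
    using assms(1,2) by (rule sys_min_weight_of_certificate)
  ultimately show ?thesis
    using fsd_lcd_code_sys_code[OF sym_mat_block_diag nonsingular_one_plus_sq_block_diag
        sys_min_weight_block_diag[OF _ assms(3)]]
    by blast
qed

definition A8 :: "f3 list list" where
  "A8 =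
   [[Z, Z, N, P, P, Z, Z, N],
    [Z, N, N, P, N, P, P, N],
    [N, N, Z, Z, P, N, P, Z],
    [P, P, Z, Z, Z, P, P, P],
    [P, N, P, Z, P, N, Z, P],
    [Z, P, N, P, N, N, Z, Z],
    [Z, P, P, P, Z, Z, P, Z],
    [N, N, Z, P, P, Z, Z, Z]]"

definition B8 :: "f3 list list" where
  "B8 =
   [[N, Z, N, N, Z, Z, N, N],
    [Z, P, N, N, N, N, P, N],
    [N, N, N, N, N, Z, Z, N],
    [N, N, N, Z, P, N, N, N],
    [Z, N, N, P, P, Z, P, Z],
    [Z, N, Z, N, Z, Z, N, N],
    [N, P, Z, N, P, N, P, Z],
    [N, N, N, N, Z, N, Z, Z]]"

definition K8 :: "f3 list list" where
  "K8 =
   [[P, P, Z, Z, N, N, N, Z],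
    [P, Z, P, Z, Z, P, P, P],
    [Z, P, Z, P, N, P, Z, Z],
    [Z, Z, P, N, P, P, N, N],
    [N, Z, N, P, Z, Z, N, N],
    [N, P, P, P, Z, Z, N, Z],
    [N, P, Z, N, N, N, N, P],
    [Z, P, Z, N, N, Z, P, P]]"

definition A9 :: "f3 list list" where
  "A9 =
   [[P, Z, Z, P, N, P, Z, N, Z],
    [Z, P, P, Z, N, N, Z, N, P],
    [Z, P, P, N, N, P, N, P, Z],
    [P, Z, N, N, N, P, P, Z, N],
    [N, N, N, N, N, N, Z, Z, Z],
    [P, N, P, P, N, P, P, P, P],
    [Z, Z, N, P, Z, P, Z, N, P],
    [N, N, P, Z, Z, P, N, P, N],
    [Z, P, Z, N, Z, P, P, N, P]]"

definition B9 :: "f3 list list" where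
  "B9 =
   [[Z, N, P, Z, N, P, Z, P, P],
    [N, Z, N, N, N, P, N, Z, N],
    [P, N, Z, Z, P, N, P, N, Z],
    [Z, N, Z, N, P, P, N, N, N],
    [N, N, P, P, P, P, N, Z, N],
    [P, P, N, P, P, Z, N, P, N],
    [Z, N, P, N, N, N, Z, N, Z],
    [P, Z, N, N, Z, P, N, P, Z],
    [P, N, Z, N, N, N, Z, Z, N]]"

definition K9 :: "f3 list list" where
  "K9 =
   [[Z, P, Z, N, P, N, N, N, Z],
    [P, Z, N, P, Z, N, N, N, Z],
    [Z, N, N, N, Z, P, P, Z, Z],
    [N, P, N, P, Z, P, N, Z, Z],
    [P, Z, Z, Z, Z, Z, N, P, P],
    [N, N, P, P, Z, P, Z, P, Z],
    [N, N, P, N, N, Z, P, Z, P],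
    [N, N, Z, Z, P, P, Z, P, P],
    [Z, Z, Z, Z, P, Z, P, P, Z]]"

definition A10 :: "f3 list list" where
  "A10 =
   [[N, P, Z, Z, P, Z, N, Z, N, Z],
    [P, Z, P, Z, N, N, N, P, P, Z],
    [Z, P, P, N, P, N, Z, Z, P, P],
    [Z, Z, N, Z, P, N, N, Z, Z, N],
    [P, N, P, P, P, P, N, P, Z, Z],
    [Z, N, N, N, P, N, Z, P, Z, Z],
    [N, N, Z, N, N, Z, N, P, Z, N],
    [Z, P, Z, Z, P, P, P, N, P, P],
    [N, P, P, Z, Z, Z, Z, P, Z, P],
    [Z, Z, P, N, Z, Z, N, P, P, N]]"

definition B10 :: "f3 list list" where
  "B10 =
   [[N, P, N, P, Z, N, Z, Z, P, N],
    [P, Z, P, P, Z, P, P, Z, P, Z],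
    [N, P, Z, N, Z, P, N, P, Z, Z],
    [P, P, N, P, P, P, Z, P, P, Z],
    [Z, Z, Z, P, N, Z, P, N, P, P],
    [N, P, P, P, Z, P, Z, N, N, P],
    [Z, P, N, Z, P, Z, P, N, P, P],
    [Z, Z, P, P, N, N, N, N, Z, Z],
    [P, P, Z, P, P, N, P, Z, Z, P],
    [N, Z, Z, Z, P, P, P, Z, P, N]]"

definition K10 :: "f3 list list" where
  "K10 =
   [[N, Z, P, Z, P, Z, Z, N, Z, Z],
    [Z, P, N, Z, Z, P, Z, N, Z, P],
    [P, N, N, P, Z, P, N, Z, Z, N],
    [Z, Z, P, Z, N, N, P, N, P, Z],
    [P, Z, Z, N, Z, Z, P, Z, P, N],
    [Z, P, P, N, Z, P, N, Z, Z, P],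
    [Z, Z, N, P, P, N, P, P, P, Z],
    [N, N, Z, N, Z, Z, P, Z, Z, P],
    [Z, Z, Z, P, P, Z, P, Z, N, Z],
    [Z, P, N, Z, N, P, Z, P, Z, N]]"

definition A11 :: "f3 list list" where
  "A11 =
   [[Z, N, Z, Z, P, N, P, Z, Z, N, N],
    [N, P, P, N, N, P, Z, N, Z, P, P],
    [Z, P, P, N, N, N, P, N, Z, N, N],
    [Z, N, N, P, N, P, Z, P, N, Z, N],
    [P, N, N, N, Z, P, N, P, P, Z, N],
    [N, P, N, P, P, P, P, Z, N, N, Z],
    [P, Z, P, Z, N, P, Z, N, N, Z, P],
    [Z, N, N, P, P, Z, N, Z, N, N, N],
    [Z, Z, Z, N, P, N, N, N, N, Z, N],
    [N, P, N, Z, Z, N, Z, N, Z, N, Z],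
    [N, P, N, N, N, Z, P, N, N, Z, N]]"

definition B11 :: "f3 list list" where
  "B11 =
   [[Z, P, N, N, Z, N, P, Z, P, Z, Z],
    [P, N, N, P, N, P, N, P, N, Z, P],
    [N, N, Z, Z, N, N, P, N, Z, N, Z],
    [N, P, Z, N, N, N, Z, N, P, P, P],
    [Z, N, N, N, P, P, N, N, Z, Z, Z],
    [N, P, N, N, P, P, N, Z, Z, N, N],
    [P, N, P, Z, N, N, P, P, N, Z, N],
    [Z, P, N, N, N, Z, P, P, Z, P, P],
    [P, N, Z, P, Z, Z, N, Z, Z, P, N],
    [Z, Z, N, P, Z, N, Z, P, P, Z, P],
    [Z, P, Z, P, Z, N, N, P, N, P, P]]"

definition K11 :: "f3 list list" where
  "K11 =
   [[Z, P, Z, Z, P, N, P, Z, Z, P, P],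
    [P, Z, N, Z, Z, Z, N, N, Z, P, Z],
    [Z, N, P, P, N, Z, N, P, Z, N, Z],
    [Z, Z, P, N, P, Z, N, N, P, N, N],
    [P, Z, N, P, P, Z, P, Z, Z, P, N],
    [N, Z, Z, Z, Z, Z, P, Z, Z, P, N],
    [P, N, N, N, P, P, P, Z, P, N, P],
    [Z, N, P, N, Z, Z, Z, P, P, Z, P],
    [Z, Z, Z, P, Z, Z, P, P, P, P, Z],
    [P, P, N, N, P, P, N, Z, P, Z, Z],
    [P, Z, Z, N, N, N, P, P, Z, Z, P]]"

definition A12 :: "f3 list list" where
  "A12 =
   [[Z, P, Z, P, Z, Z, Z, P, N, Z, N, P],
    [P, P, Z, P, N, P, N, N, N, Z, P, N],
    [Z, Z, N, N, N, N, N, N, N, P, Z, Z],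
    [P, P, N, Z, P, P, N, Z, N, Z, N, N],
    [Z, N, N, P, P, Z, N, Z, N, P, P, N],
    [Z, P, N, P, Z, P, Z, N, P, P, Z, P],
    [Z, N, N, N, N, Z, Z, N, N, P, P, P],
    [P, N, N, Z, Z, N, N, N, Z, P, P, N],
    [N, N, N, N, N, P, N, Z, Z, N, N, N],
    [Z, Z, P, Z, P, P, P, P, N, P, P, P],
    [N, P, Z, N, P, Z, P, P, N, P, Z, Z],
    [P, N, Z, N, N, P, P, N, N, P, Z, P]]"

definition B12 :: "f3 list list" where
  "B12 =
   [[P, P, Z, P, Z, Z, N, P, P, N, Z, N],
    [P, P, N, N, N, P, N, N, Z, N, Z, P],
    [Z, N, N, P, N, Z, N, P, P, P, P, P],
    [P, N, P, P, Z, P, Z, Z, P, P, Z, P],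
    [Z, N, N, Z, Z, P, N, Z, Z, N, N, Z],
    [Z, P, Z, P, P, P, P, Z, Z, P, N, Z],
    [N, N, N, Z, N, P, N, N, Z, Z, N, P],
    [P, N, P, Z, Z, Z, N, Z, Z, Z, P, N],
    [P, Z, P, P, Z, Z, Z, Z, Z, N, N, P],
    [N, N, P, P, N, P, Z, Z, N, P, P, Z],
    [Z, Z, P, Z, N, N, N, P, N, P, N, Z],
    [N, P, P, P, Z, Z, P, N, P, Z, Z, Z]]"

definition K12 :: "f3 list list" where
  "K12 =
   [[P, N, Z, N, P, Z, N, Z, P, N, P, Z],
    [N, Z, Z, P, Z, P, P, N, Z, P, N, P],
    [Z, Z, N, N, Z, P, N, Z, P, N, Z, P],
    [N, P, N, N, P, N, P, P, Z, P, P, Z],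
    [P, Z, Z, P, N, P, N, P, Z, N, P, Z],
    [Z, P, P, N, P, Z, N, Z, Z, N, N, Z],
    [N, P, N, P, N, N, N, N, Z, Z, Z, N],
    [Z, N, Z, P, P, Z, N, P, Z, P, P, Z],
    [P, Z, P, Z, Z, Z, Z, Z, N, P, N, N],
    [N, P, N, P, N, N, Z, P, P, P, N, N],
    [P, N, Z, P, P, N, Z, P, N, N, P, N],
    [Z, P, P, Z, Z, Z, N, Z, N, N, N, N]]"

definition A13 :: "f3 list list" where
  "A13 =
   [[Z, Z, Z, Z, Z, P, N, P, P, Z, N, Z, N],
    [Z, N, Z, N, Z, N, N, P, P, P, Z, Z, N],
    [Z, Z, P, P, P, N, N, N, N, Z, P, Z, N],
    [Z, N, P, Z, N, Z, P, N, Z, Z, Z, P, Z],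
    [Z, Z, P, N, P, P, N, N, P, P, N, N, P],
    [P, N, N, Z, P, P, P, Z, P, N, P, P, P],
    [N, N, N, P, N, P, N, P, P, N, N, Z, P],
    [P, P, N, N, N, Z, P, N, N, N, Z, P, P],
    [P, P, N, Z, P, P, P, N, N, N, P, N, Z],
    [Z, P, Z, Z, P, N, N, N, N, Z, P, N, Z],
    [N, Z, P, Z, N, P, N, Z, P, P, P, N, Z],
    [Z, Z, Z, P, N, P, Z, P, N, N, N, Z, P],
    [N, N, N, Z, P, P, P, P, Z, Z, Z, P, N]]"

definition B13 :: "f3 list list" where
  "B13 =
   [[Z, N, P, P, N, Z, P, Z, N, P, P, N, N],
    [N, P, P, Z, P, N, P, Z, P, P, N, Z, Z],
    [P, P, Z, Z, N, N, P, P, Z, P, P, Z, P],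
    [P, Z, Z, N, P, N, P, N, P, P, N, Z, N],
    [N, P, N, P, Z, Z, N, N, N, P, P, N, P],
    [Z, N, N, N, Z, P, N, Z, Z, P, N, P, Z],
    [P, P, P, P, N, N, P, N, P, Z, Z, Z, P],
    [Z, Z, P, N, N, Z, N, Z, Z, Z, N, N, N],
    [N, P, Z, P, N, Z, P, Z, N, Z, N, N, N],
    [P, P, P, P, P, P, Z, Z, Z, Z, P, P, Z],
    [P, N, P, N, P, N, Z, N, N, P, P, P, N],
    [N, Z, Z, Z, N, P, Z, N, N, P, P, P, P],
    [N, Z, P, N, P, Z, P, N, N, Z, N, P, P]]"

definition K13 :: "f3 list list" where
  "K13 =
   [[P, Z, P, N, Z, N, P, N, P, P, N, P, N],
    [Z, Z, N, N, N, P, Z, Z, N, Z, N, N, P],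
    [P, N, P, P, P, Z, N, Z, Z, P, Z, Z, P],
    [N, N, P, N, N, P, P, N, Z, P, Z, Z, P],
    [Z, N, P, N, Z, P, Z, Z, N, N, P, N, Z],
    [N, P, Z, P, P, Z, Z, N, P, N, Z, P, P],
    [P, Z, N, P, Z, Z, Z, N, Z, N, N, Z, Z],
    [N, Z, Z, N, Z, N, N, P, Z, N, P, Z, N],
    [P, N, Z, Z, N, P, Z, Z, N, N, P, N, N],
    [P, Z, P, P, N, N, N, N, N, N, P, P, N],
    [N, N, Z, Z, P, Z, N, P, P, P, Z, Z, N],
    [P, N, Z, Z, N, P, Z, Z, N, P, Z, P, N],
    [N, P, P, P, Z, P, Z, N, N, N, N, N, P]]"

definition A14 :: "f3 list list" where
  "A14 =
   [[Z, Z, N, N, Z, Z, Z, N, Z, Z, P, P, P, P],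
    [Z, P, P, N, Z, N, P, N, Z, Z, N, P, P, Z],
    [N, P, P, P, N, N, Z, P, N, Z, P, N, N, N],
    [N, N, P, N, Z, P, N, Z, P, N, N, Z, P, P],
    [Z, Z, N, Z, Z, N, N, N, Z, Z, N, N, P, N],
    [Z, N, N, P, N, N, Z, N, N, P, Z, N, N, Z],
    [Z, P, Z, N, N, Z, P, Z, P, P, Z, P, N, Z],
    [N, N, P, Z, N, N, Z, N, Z, N, Z, P, N, Z],
    [Z, Z, N, P, Z, N, P, Z, P, P, N, N, N, P],
    [Z, Z, Z, N, Z, P, P, N, P, Z, Z, N, N, Z],
    [P, N, P, N, N, Z, Z, Z, N, Z, Z, N, P, N],
    [P, P, N, Z, N, N, P, P, N, N, N, P, N, Z],
    [P, P, N, P, P, N, N, N, N, N, P, N, Z, Z],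
    [P, Z, N, P, N, Z, Z, Z, P, Z, N, Z, Z, P]]"

definition B14 :: "f3 list list" where
  "B14 =
   [[N, P, Z, Z, Z, Z, Z, N, N, N, N, N, P, P],
    [P, N, P, P, Z, Z, Z, Z, N, N, N, P, Z, N],
    [Z, P, P, P, N, N, N, Z, N, Z, Z, Z, N, Z],
    [Z, P, P, P, Z, P, P, P, Z, Z, Z, P, N, Z],
    [Z, Z, N, Z, Z, P, N, N, Z, Z, N, P, Z, P],
    [Z, Z, N, P, P, P, N, Z, Z, Z, P, P, P, Z],
    [Z, Z, N, P, N, N, Z, Z, P, N, P, Z, N, Z],
    [N, Z, Z, P, N, Z, Z, Z, N, P, Z, N, N, Z],
    [N, N, N, Z, Z, Z, P, N, N, Z, P, P, Z, N],
    [N, N, Z, Z, Z, Z, N, P, Z, Z, Z, P, N, P],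
    [N, N, Z, Z, N, P, P, Z, P, Z, N, N, P, P],
    [N, P, Z, P, P, P, Z, N, P, P, N, N, Z, N],
    [P, Z, N, N, Z, P, N, N, Z, N, P, Z, N, Z],
    [P, N, Z, Z, P, Z, Z, Z, N, P, P, N, Z, Z]]"

definition K14 :: "f3 list list" where
  "K14 =
   [[Z, N, Z, Z, Z, N, Z, Z, P, P, N, P, P, Z],
    [N, Z, N, P, N, N, N, N, P, N, N, P, P, P],
    [Z, N, N, P, P, P, N, P, N, P, P, N, N, P],
    [Z, P, P, Z, P, N, P, N, Z, Z, P, N, P, P],
    [Z, N, P, P, Z, P, P, Z, N, P, N, N, N, P],
    [N, N, P, N, P, Z, P, P, P, P, Z, N, P, P],
    [Z, N, N, P, P, P, P, Z, Z, P, Z, Z, N, N],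
    [Z, N, P, N, Z, P, Z, Z, Z, N, P, N, Z, P],
    [P, P, N, Z, N, P, Z, Z, N, P, Z, N, P, P],
    [P, N, P, Z, P, P, P, N, P, P, P, N, P, Z],
    [N, N, P, P, N, Z, Z, P, Z, P, Z, P, Z, N],
    [P, P, N, N, N, N, Z, N, N, N, P, Z, N, N],
    [P, P, N, P, N, P, N, Z, P, P, Z, N, N, P],
    [Z, P, P, P, P, P, N, P, P, Z, N, N, P, Z]]"

definition A15 :: "f3 list list" where
  "A15 =
   [[P, Z, P, Z, Z, P, P, Z, Z, Z, N, Z, Z, P, P],
    [Z, Z, N, N, Z, Z, P, N, P, N, P, N, Z, P, P],
    [P, N, P, Z, P, Z, N, P, N, Z, P, N, P, P, Z],
    [Z, N, Z, N, N, P, P, Z, N, Z, N, N, N, P, N],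
    [Z, Z, P, N, N, P, N, N, Z, P, Z, N, N, Z, Z],
    [P, Z, Z, P, P, Z, P, N, Z, P, N, N, Z, Z, P],
    [P, P, N, P, N, P, N, Z, N, N, N, Z, P, Z, N],
    [Z, N, P, Z, N, N, Z, Z, P, N, P, Z, Z, N, N],
    [Z, P, N, N, Z, Z, N, P, Z, N, N, N, N, N, Z],
    [Z, N, Z, Z, P, P, N, N, N, Z, Z, Z, P, Z, N],
    [N, P, P, N, Z, N, N, P, N, Z, Z, Z, P, Z, Z],
    [Z, N, N, N, N, N, Z, Z, N, Z, Z, P, Z, N, N],
    [Z, Z, P, N, N, Z, P, Z, N, P, P, Z, P, P, P],
    [P, P, P, P, Z, Z, Z, N, N, Z, Z, N, P, P, Z],
    [P, P, Z, N, Z, P, N, N, Z, N, Z, N, P, Z, Z]]"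

definition B15 :: "f3 list list" where
  "B15 =
   [[Z, N, Z, P, N, N, Z, N, Z, P, N, N, N, N, N],
    [N, P, Z, Z, N, N, N, N, Z, P, P, Z, Z, N, N],
    [Z, Z, N, P, Z, N, P, N, Z, N, N, N, Z, P, N],
    [P, Z, P, N, N, Z, Z, N, Z, P, N, N, Z, Z, Z],
    [N, N, Z, N, P, Z, N, Z, P, N, P, Z, N, N, P],
    [N, N, N, Z, Z, P, Z, N, N, Z, Z, N, N, P, Z],
    [Z, N, P, Z, N, Z, Z, N, P, N, P, Z, N, P, N],
    [N, N, N, N, Z, N, N, Z, N, P, N, P, Z, P, N],
    [Z, Z, Z, Z, P, N, P, N, P, P, N, Z, N, P, P],
    [P, P, N, P, N, Z, N, P, P, N, P, Z, P, N, Z],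
    [N, P, N, N, P, Z, P, N, N, P, Z, Z, Z, Z, P],
    [N, Z, N, N, Z, N, Z, P, Z, Z, Z, P, Z, N, P],
    [N, Z, Z, Z, N, N, N, Z, N, P, Z, Z, N, P, N],
    [N, N, P, Z, N, P, P, P, P, N, Z, N, P, N, N],
    [N, N, N, Z, P, Z, N, N, P, Z, P, P, N, N, N]]"

definition K15 :: "f3 list list" where
  "K15 =
   [[N, N, N, Z, N, N, Z, N, N, N, P, P, Z, N, P],
    [N, P, N, N, N, P, N, N, P, P, Z, Z, N, N, N],
    [N, N, Z, Z, P, N, P, Z, N, Z, N, Z, N, P, N],
    [Z, N, Z, P, P, Z, P, N, P, P, Z, Z, Z, Z, Z],
    [N, N, P, P, Z, Z, Z, N, P, N, P, P, Z, N, Z],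
    [N, P, N, Z, Z, Z, Z, P, Z, Z, Z, N, P, P, P],
    [Z, N, P, P, Z, Z, N, Z, P, Z, N, Z, P, P, Z],
    [N, N, Z, N, N, P, Z, N, Z, P, N, N, Z, P, P],
    [N, P, N, P, P, Z, P, Z, P, N, N, Z, N, N, Z],
    [N, P, Z, P, N, Z, Z, P, N, Z, Z, P, Z, Z, P],
    [P, Z, N, Z, P, Z, N, N, N, Z, N, Z, N, Z, Z],
    [P, Z, Z, Z, P, N, Z, N, Z, P, Z, P, N, Z, Z],
    [Z, N, N, Z, Z, P, P, Z, N, Z, N, N, N, Z, N],
    [N, N, P, Z, N, P, P, P, N, Z, Z, Z, Z, P, Z],
    [P, N, N, Z, Z, P, Z, P, Z, P, Z, Z, N, Z, Z]]"

lemma certificate_8: "ternary_certificate 8 2 5 A8 B8 K8"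
  by code_simp

lemma certificate_9: "ternary_certificate 9 2 6 A9 B9 K9"
  by code_simp

lemma certificate_10: "ternary_certificate 10 2 6 A10 B10 K10"
  by code_simp

lemma certificate_11: "ternary_certificate 11 3 7 A11 B11 K11"
  by code_simp

lemma certificate_12: "ternary_certificate 12 3 7 A12 B12 K12"
  by code_simp

lemma certificate_13: "ternary_certificate 13 3 7 A13 B13 K13"
  by code_simp

lemma certificate_14: "ternary_certificate 14 3 8 A14 B14 K14"
  by code_simp

lemma certificate_15: "ternary_certificate 15 3 8 A15 B15 K15"
  by code_simp

theorem theorem7:
  fixes s :: nat
  assumes "s \<ge> 1" and "card (UNIV :: 'a::field set) = 3"
  shows "(\<forall>n1\<in>{9, 10}. \<exists>C :: (nat \<Rightarrow> 'a) set. fsd_lcd_code (4*s*n1) (2*s*n1) 6 C)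
    \<and> (\<forall>n2\<in>{11, 12, 13}. \<exists>C :: (nat \<Rightarrow> 'a) set. fsd_lcd_code (4*s*n2) (2*s*n2) 7 C)
    \<and> (\<forall>n3\<in>{14, 15}. \<exists>C :: (nat \<Rightarrow> 'a) set. fsd_lcd_code (4*s*n3) (2*s*n3) 8 C)
    \<and> (\<exists>C :: (nat \<Rightarrow> 'a) set. fsd_lcd_code (32*s) (16*s) 5 C)"
proof -
  have code: "\<exists>C :: (nat \<Rightarrow> 'a) set. fsd_lcd_code (4 * s * m) (2 * s * m) d C"
    if "ternary_certificate m t d A B K" for m t d A B K
    using fsd_lcd_code_of_certificate[OF assms(2) that, of "2 * s"] assms(1)
    by (simp add: mult.assoc)
  show ?thesis
    using code[OF certificate_8] code[OF certificate_9] code[OF certificate_10] code[OF certificate_11]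
      code[OF certificate_12] code[OF certificate_13] code[OF certificate_14] code[OF certificate_15]
    by (simp add: mult.commute)
qed

end
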